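(* Let $d\ge1$ and let $g\colon\mathbb{R}^d\rightarrow[0,\infty)$ be measurable. Let $\beta>1$ and $\alpha>d(\beta-1)$. Then \[ \int_{\mathbb{R}^d} g(x)\,dx \ \leq \ C_{\alpha,\beta,d} \bigg(\int_{\mathbb{R}^d} g(x)^\beta\,dx\bigg)^{\frac{\alpha-d(\beta-1)}{\alpha\beta}} \bigg(\int_{\mathbb{R}^d} |x|^\alpha\,g(x)^\beta\,dx\bigg)^{\frac{d(\beta-1)}{\alpha\beta}}, \] where \[ C_{\alpha,\beta,d} = \bigg(\frac{\alpha}{d(\beta-1)}\bigg)^{1/\beta}\bigg(\frac{d(\beta-1)}{\alpha-d(\beta-1)}\bigg)^{\frac{\alpha-d(\beta-1)}{\alpha\beta}}\bigg(\frac{2\pi^{d/2}}{\Gamma(\frac{d}{2})}\frac{1}{\alpha}I_{\alpha,\beta,d}\bigg)^{\frac{\beta-1}{\beta}}, \qquad I_{\alpha,\beta,d} = \int_0^\infty\frac{s^{\frac{d}{\alpha}-1}}{(1+s)^{\frac{1}{\beta-1}}}\,ds = \frac{\Gamma\big(\frac{d}{\alpha}\big) \Gamma\big(\frac{1}{\beta-1} - \frac{d}{\alpha}\big)}{\Gamma\big(\frac{1}{\beta-1}\big)}. \]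
   Context: $\Gamma$ denotes the gamma function and $|\cdot|$ the Euclidean norm on $\mathbb R^d$. *)

theory Defs
  imports "HOL-Analysis.Analysis"
begin

text \<open>Real power of an extended nonnegative real, for positive exponents:
  \<infinity> powr p = \<infinity>, and otherwise the usual real power (0 powr p = 0).\<close>
definition ennreal_powr :: "ennreal \<Rightarrow> real \<Rightarrow> ennreal" where
  "ennreal_powr x p = (if x = \<infinity> then \<infinity> else ennreal (enn2real x powr p))"

definition I_const :: "real \<Rightarrow> real \<Rightarrow> real \<Rightarrow> real" where
  "I_const \<alpha> \<beta> d = (LBINT s=0..\<infinity>. s powr (d / \<alpha> - 1) / (1 + s) powr (1 / (\<beta> - 1)))"

definition C_const :: "real \<Rightarrow> real \<Rightarrow> real \<Rightarrow> real" where
  "C_const \<alpha> \<beta> d =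
     (\<alpha> / (d * (\<beta> - 1))) powr (1 / \<beta>)
   * (d * (\<beta> - 1) / (\<alpha> - d * (\<beta> - 1))) powr ((\<alpha> - d * (\<beta> - 1)) / (\<alpha> * \<beta>))
   * ((2 * pi powr (d / 2) / Gamma (d / 2)) * (1 / \<alpha>) * I_const \<alpha> \<beta> d) powr ((\<beta> - 1) / \<beta>)"

end

theory Submission
  imports Defs "HOL-Real_Asymp.Real_Asymp"
begin

(* For l > 0 consider the weight w(x) = 1 + l |x|^alpha. Hoelder's inequality with this weight
   (proved via Young's inequality with an optimised scaling) gives
     int g <= (int g^beta + l int |x|^alpha g^beta)^(1/beta) * (int w^(-1/(beta-1)))^((beta-1)/beta).
   In polar coordinates the last integral equals l^(-d/alpha) |S^(d-1)| I / alpha, and the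
   substitution s = u/(1-u) identifies I with the Beta integral B(d/alpha, 1/(beta-1) - d/alpha),
   which is finite precisely because alpha > d(beta-1).  Choosing l = t A / ((1-t) B) with
   t = d(beta-1)/alpha, A = int g^beta and B = int |x|^alpha g^beta gives the constant C. *)

lemma ennreal_powr_top [simp]: "ennreal_powr top p = top"
  by (simp add: ennreal_powr_def)

lemma ennreal_powr_ennreal: "0 \<le> x \<Longrightarrow> ennreal_powr (ennreal x) p = ennreal (x powr p)"
  by (simp add: ennreal_powr_def)

lemma ennreal_powr_eq_0_iff [simp]: "ennreal_powr x p = 0 \<longleftrightarrow> x = 0"
  by (cases x) (auto simp: ennreal_powr_def ennreal_eq_0_iff)

lemma ennreal_le_mult_powr_cases:
  fixes X A B :: ennreal and C p q :: real
  assumes C: "C > 0"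
    and degenerate: "A = 0 \<or> B = 0 \<Longrightarrow> X = 0"
    and finite: "\<And>a b. a > 0 \<Longrightarrow> b > 0 \<Longrightarrow> A = ennreal a \<Longrightarrow> B = ennreal b
                   \<Longrightarrow> X \<le> ennreal (C * a powr p * b powr q)"
  shows "X \<le> ennreal C * ennreal_powr A p * ennreal_powr B q"
proof (cases "A = 0 \<or> B = 0")
  case True
  then show ?thesis using degenerate by simp
next
  case nonzero: False
  show ?thesis
  proof (cases "A = \<infinity> \<or> B = \<infinity>")
    case True
    then have "ennreal C * ennreal_powr A p * ennreal_powr B q = \<infinity>"
      using nonzero C by (auto simp: ennreal_mult_eq_top_iff)
    then show ?thesis by simp
  next
    case False
    then obtain a b where "A = ennreal a" "B = ennreal b" "a \<ge> 0" "b \<ge> 0"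
      by (metis ennreal_cases infinity_ennreal_def)
    with nonzero show ?thesis
      using finite[of a b] C by (simp add: ennreal_powr_ennreal ennreal_mult)
  qed
qed

lemma Youngs_inequality_scaled:
  fixes \<beta> v y :: real
  assumes \<beta>: "\<beta> > 1" and v: "v > 0" and y: "y \<ge> 0"
  shows "y \<le> v * y powr \<beta> / \<beta> + (\<beta> - 1) / \<beta> * v powr (-1 / (\<beta> - 1))"
proof -
  define p where "p = \<beta> / (\<beta> - 1)"
  define u where "u = v powr (1 / \<beta>)"
  have p: "p > 1" "1 / \<beta> + 1 / p = 1" using \<beta> by (auto simp: p_def field_simps)
  have u: "u > 0" using v by (simp add: u_def)
  have "u * y * (1 / u) \<le> (u * y) powr \<beta> / \<beta> + (1 / u) powr p / p"
    by (rule Youngs_inequality) (use \<beta> p y u in auto)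
  moreover have "(u * y) powr \<beta> = v * y powr \<beta>"
    using \<beta> v y by (simp add: u_def powr_mult powr_powr)
  moreover have "(1 / u) powr p / p = (\<beta> - 1) / \<beta> * v powr (-1 / (\<beta> - 1))"
    using \<beta> v by (simp add: u_def powr_divide powr_powr powr_minus_divide p_def field_simps)
  ultimately show ?thesis using u by simp
qed

lemma Young_weighted_optimum:
  fixes \<beta> P Q :: real
  assumes \<beta>: "\<beta> > 1" and P: "P > 0" and Q: "Q > 0"
  defines "\<mu> \<equiv> (Q / P) powr ((\<beta> - 1) / \<beta>)"
  shows "\<mu> / \<beta> * P + (\<beta> - 1) / \<beta> * \<mu> powr (-1 / (\<beta> - 1)) * Q
       = P powr (1 / \<beta>) * Q powr ((\<beta> - 1) / \<beta>)" (is "_ = ?R")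
proof -
  have "ln (\<mu> * P) = ln ?R" "ln (\<mu> powr (-1 / (\<beta> - 1)) * Q) = ln ?R"
    using \<beta> P Q by (simp_all add: \<mu>_def ln_mult ln_powr ln_div field_simps)
  then have "\<mu> * P = ?R" "\<mu> powr (-1 / (\<beta> - 1)) * Q = ?R"
    using P Q by (simp_all add: \<mu>_def ln_inj_iff)
  then show ?thesis
    using \<beta> by (simp add: field_simps)
qed

lemma nn_integral_le_Young_weighted:
  fixes M :: "'a measure" and g w :: "'a \<Rightarrow> real" and \<beta> \<mu> :: real
  assumes \<beta>: "\<beta> > 1" and \<mu>: "\<mu> > 0"
    and g: "g \<in> borel_measurable M" "\<And>x. g x \<ge> 0"
    and w: "w \<in> borel_measurable M" "\<And>x. w x > 0"
  shows "(\<integral>\<^sup>+ x. ennreal (g x) \<partial>M)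
       \<le> ennreal (\<mu> / \<beta>) * (\<integral>\<^sup>+ x. ennreal (g x powr \<beta> * w x) \<partial>M)
         + ennreal ((\<beta> - 1) / \<beta> * \<mu> powr (-1 / (\<beta> - 1)))
           * (\<integral>\<^sup>+ x. ennreal (w x powr (-1 / (\<beta> - 1))) \<partial>M)"
proof -
  define c where "c = (\<beta> - 1) / \<beta> * \<mu> powr (-1 / (\<beta> - 1))"
  have c: "c \<ge> 0" using \<beta> by (simp add: c_def)
  have "ennreal (g x) \<le> ennreal (\<mu> / \<beta> * (g x powr \<beta> * w x) + c * w x powr (-1 / (\<beta> - 1)))" for x
    using Youngs_inequality_scaled[OF \<beta> mult_pos_pos[OF \<mu> w(2)] g(2), of x] \<mu> w(2)[of x]
    by (intro ennreal_leI) (simp add: c_def powr_mult field_simps)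
  also have "\<dots> x = ennreal (\<mu> / \<beta>) * ennreal (g x powr \<beta> * w x)
                   + ennreal c * ennreal (w x powr (-1 / (\<beta> - 1)))" for x
    using \<beta> \<mu> c w(2)[of x]
    by (simp add: ennreal_mult'[symmetric] ennreal_plus[symmetric] del: ennreal_plus)
  finally have "(\<integral>\<^sup>+ x. ennreal (g x) \<partial>M)
      \<le> (\<integral>\<^sup>+ x. ennreal (\<mu> / \<beta>) * ennreal (g x powr \<beta> * w x)
             + ennreal c * ennreal (w x powr (-1 / (\<beta> - 1))) \<partial>M)"
    by (intro nn_integral_mono)
  also have "\<dots> = ennreal (\<mu> / \<beta>) * (\<integral>\<^sup>+ x. ennreal (g x powr \<beta> * w x) \<partial>M)
         + ennreal c * (\<integral>\<^sup>+ x. ennreal (w x powr (-1 / (\<beta> - 1))) \<partial>M)"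
    using g(1) w(1) by (simp add: nn_integral_add nn_integral_cmult)
  finally show ?thesis by (simp add: c_def)
qed

lemma nn_integral_le_weighted_Holder:
  fixes M :: "'a measure" and g w :: "'a \<Rightarrow> real" and \<beta> P Q :: real
  assumes \<beta>: "\<beta> > 1"
    and g: "g \<in> borel_measurable M" "\<And>x. g x \<ge> 0"
    and w: "w \<in> borel_measurable M" "\<And>x. w x > 0"
    and P: "(\<integral>\<^sup>+ x. ennreal (g x powr \<beta> * w x) \<partial>M) = ennreal P" "P > 0"
    and Q: "(\<integral>\<^sup>+ x. ennreal (w x powr (-1 / (\<beta> - 1))) \<partial>M) = ennreal Q" "Q > 0"
  shows "(\<integral>\<^sup>+ x. ennreal (g x) \<partial>M) \<le> ennreal (P powr (1 / \<beta>) * Q powr ((\<beta> - 1) / \<beta>))"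
proof -
  define \<mu> where "\<mu> = (Q / P) powr ((\<beta> - 1) / \<beta>)"
  have "\<mu> > 0" using P Q by (simp add: \<mu>_def)
  from nn_integral_le_Young_weighted[OF \<beta> this g w]
  have "(\<integral>\<^sup>+ x. ennreal (g x) \<partial>M)
      \<le> ennreal (\<mu> / \<beta> * P + (\<beta> - 1) / \<beta> * \<mu> powr (-1 / (\<beta> - 1)) * Q)"
    using \<beta> \<open>\<mu> > 0\<close> P Q by (simp add: ennreal_mult'[symmetric] ennreal_plus[symmetric] del: ennreal_plus)
  then show ?thesis
    using Young_weighted_optimum[OF \<beta> P(2) Q(2)] by (simp add: \<mu>_def)
qed

lemma nn_integral_mult_one_plus:
  fixes M :: "'a measure" and u v :: "'a \<Rightarrow> real" and l :: real
  assumes u: "u \<in> borel_measurable M" "\<And>x. u x \<ge> 0"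
    and v: "v \<in> borel_measurable M" "\<And>x. v x \<ge> 0" and l: "l \<ge> 0"
  shows "(\<integral>\<^sup>+ x. ennreal (u x * (1 + l * v x)) \<partial>M)
       = (\<integral>\<^sup>+ x. ennreal (u x) \<partial>M) + ennreal l * (\<integral>\<^sup>+ x. ennreal (v x * u x) \<partial>M)"
proof -
  have "ennreal (u x * (1 + l * v x)) = ennreal (u x) + ennreal l * ennreal (v x * u x)" for x
    using u(2)[of x] v(2)[of x] l
    by (simp add: algebra_simps ennreal_mult'[symmetric] ennreal_plus[symmetric] del: ennreal_plus)
  then show ?thesis
    using u(1) v(1) by (simp add: nn_integral_add nn_integral_cmult)
qed

lemma scaled_norm_powr_less_iff:
  fixes x :: "'a::real_normed_vector" and c \<alpha> t :: real
  assumes c: "c > 0" and \<alpha>: "\<alpha> > 0" and t: "t > 0"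
  shows "c * norm x powr \<alpha> < t \<longleftrightarrow> norm x < (t / c) powr (1 / \<alpha>)"
proof -
  define R where "R = (t / c) powr (1 / \<alpha>)"
  have R: "R > 0" using c t by (simp add: R_def)
  have "R powr \<alpha> = t / c"
    using c t \<alpha> by (simp add: R_def powr_powr)
  moreover have "c * norm x powr \<alpha> < t \<longleftrightarrow> norm x powr \<alpha> < t / c"
    using c by (simp add: field_simps)
  moreover have "norm x powr \<alpha> < R powr \<alpha> \<longleftrightarrow> norm x < R"
  proof
    assume "norm x powr \<alpha> < R powr \<alpha>"
    then show "norm x < R"
      using powr_mono2[of \<alpha> R "norm x"] \<alpha> R by (cases "norm x < R") auto
  qed (use powr_less_mono2[of \<alpha> "norm x" R] \<alpha> in simp)
  ultimately show ?thesis
    unfolding R_def[symmetric] by simp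
qed

lemma emeasure_scaled_norm_powr_less:
  fixes c \<alpha> t :: real
  assumes c: "c > 0" and \<alpha>: "\<alpha> > 0"
  shows "emeasure lborel {x::'a::euclidean_space. c * norm x powr \<alpha> < t}
       = ennreal (unit_ball_vol DIM('a) * (max t 0 / c) powr (DIM('a) / \<alpha>))"
proof (cases "t > 0")
  case True
  define R where "R = (t / c) powr (1 / \<alpha>)"
  have R: "R > 0" using c True by (simp add: R_def)
  have "{x::'a. c * norm x powr \<alpha> < t} = ball 0 R"
    using scaled_norm_powr_less_iff[OF c \<alpha> True, where 'a='a] by (auto simp: R_def)
  then have "emeasure lborel {x::'a. c * norm x powr \<alpha> < t} = ennreal (unit_ball_vol DIM('a) * R ^ DIM('a))"
    using R by (simp add: emeasure_ball)
  also have "R ^ DIM('a) = (t / c) powr (DIM('a) / \<alpha>)"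
    using R by (simp add: R_def powr_realpow[symmetric] powr_powr)
  finally show ?thesis using True by simp
next
  case False
  have "0 \<le> c * norm x powr \<alpha>" for x :: 'a
    using c by simp
  then have "t \<le> c * norm x powr \<alpha>" for x :: 'a
    using False by (meson not_less order_trans)
  then have "{x::'a. c * norm x powr \<alpha> < t} = {}"
    by (simp add: not_less)
  then show ?thesis using False \<alpha> by simp
qed

lemma distr_lborel_scaled_norm_powr:
  fixes c \<alpha> :: real
  assumes c: "c > 0" and \<alpha>: "\<alpha> > 0"
  shows "distr lborel borel (\<lambda>x::'a::euclidean_space. c * norm x powr \<alpha>)
       = density lborel (\<lambda>s. ennreal (unit_ball_vol DIM('a) * (DIM('a) / \<alpha>) * c powr (-(DIM('a) / \<alpha>))
                                      * s powr (DIM('a) / \<alpha> - 1)) * indicator {0..} s)"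
    (is "?M = ?N")
proof (rule measure_eqI_generator_eq_countable[where E="range lessThan" and \<Omega>=UNIV and A="range (\<lambda>n::nat. {..<real n})"])
  define m where "m = DIM('a) / \<alpha>"
  have m: "m > 0" using \<alpha> by (simp add: m_def)
  have M: "emeasure ?M {..<t} = ennreal (unit_ball_vol DIM('a) * (max t 0 / c) powr m)" for t
    using emeasure_scaled_norm_powr_less[OF c \<alpha>, of t, where 'a='a]
    by (subst emeasure_distr) (auto simp: m_def vimage_def)
  have N: "emeasure ?N {..<t} = ennreal (unit_ball_vol DIM('a) * (max t 0 / c) powr m)" for t
  proof (cases "t > 0")
    case True
    have "emeasure ?N {..<t} = (\<integral>\<^sup>+ s. ennreal (unit_ball_vol DIM('a) * m * c powr (-m))
                                         * (ennreal (s powr (m - 1)) * indicator {0..t} s) \<partial>lborel)"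
      by (subst emeasure_density)
         (auto intro!: nn_integral_cong_AE eventually_mono[OF AE_lborel_singleton[of t]]
               simp: indicator_def m_def ennreal_mult'[symmetric] mult_ac)
    also have "\<dots> = ennreal (unit_ball_vol DIM('a) * m * c powr (-m)) * ennreal (t powr m / m)"
      using nn_integral_has_integral_lebesgue'[OF _ has_integral_powr_from_0[of "m - 1" t]] m True
      by (simp add: nn_integral_cmult)
    also have "\<dots> = ennreal (unit_ball_vol DIM('a) * (max t 0 / c) powr m)"
      using m c True by (simp add: ennreal_mult'[symmetric] powr_divide powr_minus field_simps)
    finally show ?thesis .
  next
    case False
    then have "emeasure ?N {..<t} = 0"
      by (subst emeasure_density) (auto simp: nn_integral_0_iff_AE indicator_def)
    then show ?thesis using False m by simp
  qed
  show "\<And>X. X \<in> range lessThan \<Longrightarrow> emeasure ?M X = emeasure ?N X"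
    using M N by auto
  show "\<And>X. X \<in> range (\<lambda>n::nat. {..<real n}) \<Longrightarrow> emeasure ?M X \<noteq> \<infinity>"
    using M by auto
  show "Int_stable (range lessThan :: real set set)"
  proof (clarsimp simp: Int_stable_def)
    fix a b :: real
    have "{..<a} \<inter> {..<b} = {..<min a b}" by auto
    then show "{..<a} \<inter> {..<b} \<in> range lessThan" by blast
  qed
  show "sets ?M = sigma_sets UNIV (range lessThan)" "sets ?N = sigma_sets UNIV (range lessThan)"
    by (simp_all add: borel_Iio)
  show "\<Union> (range (\<lambda>n::nat. {..<real n})) = UNIV"
    by (auto intro: reals_Archimedean2)
qed auto

lemma nn_integral_radial:
  fixes f :: "real \<Rightarrow> ennreal" and c \<alpha> :: real
  assumes c: "c > 0" and \<alpha>: "\<alpha> > 0" and f: "f \<in> borel_measurable borel"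
  shows "(\<integral>\<^sup>+ x. f (c * norm (x::'a::euclidean_space) powr \<alpha>) \<partial>lborel)
       = ennreal (unit_ball_vol DIM('a) * (DIM('a) / \<alpha>) * c powr (-(DIM('a) / \<alpha>)))
         * (\<integral>\<^sup>+ s. ennreal (s powr (DIM('a) / \<alpha> - 1)) * indicator {0..} s * f s \<partial>lborel)"
proof -
  have "(\<integral>\<^sup>+ x. f (c * norm (x::'a) powr \<alpha>) \<partial>lborel)
      = (\<integral>\<^sup>+ s. f s \<partial>distr lborel borel (\<lambda>x::'a. c * norm x powr \<alpha>))"
    using f by (simp add: nn_integral_distr)
  also have "\<dots> = (\<integral>\<^sup>+ s. ennreal (unit_ball_vol DIM('a) * (DIM('a) / \<alpha>) * c powr (-(DIM('a) / \<alpha>)))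
                     * (ennreal (s powr (DIM('a) / \<alpha> - 1)) * indicator {0..} s * f s) \<partial>lborel)"
    using f \<alpha> unfolding distr_lborel_scaled_norm_powr[OF c \<alpha>]
    by (subst nn_integral_density) (auto intro!: nn_integral_cong simp: ennreal_mult'[symmetric] mult_ac)
  also have "\<dots> = ennreal (unit_ball_vol DIM('a) * (DIM('a) / \<alpha>) * c powr (-(DIM('a) / \<alpha>)))
         * (\<integral>\<^sup>+ s. ennreal (s powr (DIM('a) / \<alpha> - 1)) * indicator {0..} s * f s \<partial>lborel)"
    using f by (simp add: nn_integral_cmult)
  finally show ?thesis .
qed

lemma Beta_integrand_substitution:
  fixes a q u :: real
  assumes "0 < u" "u < 1"
  shows "(u / (1 - u)) powr (a - 1) / (1 + u / (1 - u)) powr q * (1 / (1 - u)\<^sup>2)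
       = u powr (a - 1) * (1 - u) powr (q - a - 1)"
proof -
  have "1 + u / (1 - u) = 1 / (1 - u)" and "(1 - u)\<^sup>2 = (1 - u) powr 2"
    using assms by (simp_all add: field_simps powr_realpow)
  moreover have "(1 - u) powr q / ((1 - u) powr (a - 1) * (1 - u) powr 2) = (1 - u) powr (q - a - 1)"
    by (simp add: powr_add[symmetric] powr_diff[symmetric] algebra_simps)
  ultimately show ?thesis
    using assms by (simp add: powr_divide field_simps)
qed

lemma
  fixes f :: "real \<Rightarrow> real"
  assumes cont: "\<And>s. s > 0 \<Longrightarrow> isCont f s" and nonneg: "\<And>s. s > 0 \<Longrightarrow> 0 \<le> f s"
    and integrable: "set_integrable lborel (einterval 0 1) (\<lambda>u. f (u / (1 - u)) * (1 / (1 - u)\<^sup>2))"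
  shows set_integrable_halfline_substitution: "set_integrable lborel (einterval 0 \<infinity>) f"
    and interval_integral_halfline_substitution:
          "(LBINT s=0..\<infinity>. f s) = (LBINT u=0..1. f (u / (1 - u)) * (1 / (1 - u)\<^sup>2))"
proof -
  have lim0: "((ereal \<circ> (\<lambda>u. u / (1 - u)) \<circ> real_of_ereal) \<longlongrightarrow> 0) (at_right 0)"
  proof -
    have "((\<lambda>u::real. u / (1 - u)) \<longlongrightarrow> 0) (at_right 0)" by real_asymp
    then show ?thesis by (simp add: zero_ereal_def ereal_tendsto_simps)
  qed
  have lim1: "((ereal \<circ> (\<lambda>u. u / (1 - u)) \<circ> real_of_ereal) \<longlongrightarrow> \<infinity>) (at_left 1)"
  proof -
    have "filterlim (\<lambda>u::real. u / (1 - u)) at_top (at_left 1)" by real_asymp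
    then show ?thesis by (simp add: one_ereal_def ereal_tendsto_simps)
  qed
  have deriv: "((\<lambda>u::real. u / (1 - u)) has_real_derivative 1 / (1 - u)\<^sup>2) (at u)" if "u < 1" for u
    using that by (auto intro!: derivative_eq_intros simp: power2_eq_square field_simps)
  have cont_g': "isCont (\<lambda>u::real. 1 / (1 - u)\<^sup>2) u" if "u < 1" for u
    using that by (auto intro!: continuous_intros)
  have pos: "u / (1 - u) > 0" if "0 < u" "u < 1" for u :: real
    using that by simp
  note substitution = interval_integral_substitution_nonneg
    [of 0 1 "\<lambda>u. u / (1 - u)" "\<lambda>u. 1 / (1 - u)\<^sup>2" f 0 \<infinity>, OF _ _ _ _ _ _ lim0 lim1 integrable]
  show "set_integrable lborel (einterval 0 \<infinity>) f"
    and "(LBINT s=0..\<infinity>. f s) = (LBINT u=0..1. f (u / (1 - u)) * (1 / (1 - u)\<^sup>2))"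
    by (rule substitution;
        auto simp: zero_ereal_def one_ereal_def intro: deriv cont_g' cont nonneg pos)+
qed

lemma
  fixes a q :: real
  assumes a: "a > 0" and q: "q > a"
  shows set_integrable_Beta_halfline:
          "set_integrable lborel (einterval 0 \<infinity>) (\<lambda>s. s powr (a - 1) / (1 + s) powr q)"
    and interval_integral_Beta_halfline:
          "(LBINT s=0..\<infinity>. s powr (a - 1) / (1 + s) powr q) = Beta a (q - a)"
proof -
  define f where "f = (\<lambda>s::real. s powr (a - 1) / (1 + s) powr q)"
  define B where "B = (\<lambda>u::real. u powr (a - 1) * (1 - u) powr (q - a - 1))"
  have f: "isCont f s" "0 \<le> f s" if "s > 0" for s
    using that by (auto simp: f_def intro!: continuous_intros)
  have B: "set_integrable lborel {0..1} B"
    using integrable_Beta[of a "q - a"] a q by (simp add: B_def)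
  have fB: "f (u / (1 - u)) / (1 - u)\<^sup>2 = B u" if "0 < u" "u < 1" for u
    using Beta_integrand_substitution[OF that] by (simp add: f_def B_def)
  have "set_integrable lborel (einterval 0 1) B"
    by (rule set_integrable_subset[OF B]) (auto simp: einterval_def)
  then have "set_integrable lborel (einterval 0 1) (\<lambda>u. f (u / (1 - u)) * (1 / (1 - u)\<^sup>2))"
    by (subst set_integrable_cong[OF refl refl]) (auto simp: einterval_def fB)
  note substitution = set_integrable_halfline_substitution[OF f this]
    interval_integral_halfline_substitution[OF f this]
  have "(LBINT u=0..1. f (u / (1 - u)) * (1 / (1 - u)\<^sup>2)) = (LBINT u=0..1. B u)"
    by (rule interval_integral_cong) (auto simp: fB einterval_def)
  also have "\<dots> = integral {0..1} B"
    using B by (simp add: zero_ereal_def one_ereal_def interval_integral_Icc set_borel_integral_eq_integral)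
  also have "\<dots> = Beta a (q - a)"
    using has_integral_Beta_real[of a "q - a"] a q by (simp add: B_def has_integral_iff)
  finally show "set_integrable lborel (einterval 0 \<infinity>) f" "(LBINT s=0..\<infinity>. f s) = Beta a (q - a)"
    using substitution by simp_all
qed

lemma nn_integral_Beta_halfline:
  fixes a q :: real
  assumes a: "a > 0" and q: "q > a"
  shows "(\<integral>\<^sup>+ s. ennreal (s powr (a - 1)) * indicator {0..} s * ennreal ((1 + s) powr (-q)) \<partial>lborel)
       = ennreal (Beta a (q - a))"
proof -
  define f where "f = (\<lambda>s::real. s powr (a - 1) / (1 + s) powr q)"
  have "(\<integral>\<^sup>+ s. ennreal (s powr (a - 1)) * indicator {0..} s * ennreal ((1 + s) powr (-q)) \<partial>lborel)
      = (\<integral>\<^sup>+ s. ennreal (indicator (einterval 0 \<infinity>) s *\<^sub>R f s) \<partial>lborel)"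
    by (intro nn_integral_cong_AE eventually_mono[OF AE_lborel_singleton[of 0]])
       (auto simp: einterval_def f_def indicator_def powr_minus_divide ennreal_mult'[symmetric])
  also have "\<dots> = ennreal (integral\<^sup>L lborel (\<lambda>s. indicator (einterval 0 \<infinity>) s *\<^sub>R f s))"
    using set_integrable_Beta_halfline[OF a q] unfolding set_integrable_def f_def
    by (intro nn_integral_eq_integral) (auto simp: indicator_def)
  also have "integral\<^sup>L lborel (\<lambda>s. indicator (einterval 0 \<infinity>) s *\<^sub>R f s) = (LBINT s=0..\<infinity>. f s)"
    by (simp add: interval_lebesgue_integral_def set_lebesgue_integral_def)
  finally show ?thesis
    using interval_integral_Beta_halfline[OF a q] by (simp add: f_def)
qed

lemma nn_integral_radial_weight_powr:
  fixes c \<alpha> q :: real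
  assumes c: "c > 0" and \<alpha>: "\<alpha> > 0" and q: "q > DIM('a) / \<alpha>"
  shows "(\<integral>\<^sup>+ x. ennreal ((1 + c * norm (x::'a::euclidean_space) powr \<alpha>) powr (-q)) \<partial>lebesgue)
       = ennreal (unit_ball_vol DIM('a) * (DIM('a) / \<alpha>) * Beta (DIM('a) / \<alpha>) (q - DIM('a) / \<alpha>)
                  * c powr (-(DIM('a) / \<alpha>)))"
proof -
  have m: "DIM('a) / \<alpha> > 0" using \<alpha> by simp
  then have "Beta (DIM('a) / \<alpha>) (q - DIM('a) / \<alpha>) > 0"
    using q by (simp add: Beta_def)
  with m show ?thesis
    using nn_integral_radial[OF c \<alpha>, of "\<lambda>s. ennreal ((1 + s) powr (-q))", where 'a='a]
      nn_integral_Beta_halfline[of "DIM('a) / \<alpha>" q] q \<alpha>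
    by (simp add: nn_integral_completion ennreal_mult'[symmetric] mult_ac)
qed

lemma unit_ball_vol_times_dim:
  fixes n :: real
  assumes "n > 0"
  shows "unit_ball_vol n * n = 2 * pi powr (n / 2) / Gamma (n / 2)"
proof -
  have "Gamma (n / 2 + 1) = n / 2 * Gamma (n / 2)"
    using assms Gamma_plus1[of "n / 2"] by (simp add: nonpos_Ints_def)
  moreover have "Gamma (n / 2) > 0" using assms by simp
  ultimately show ?thesis
    unfolding unit_ball_vol_def \<open>Gamma (n / 2 + 1) = _\<close> using assms by (simp add: field_simps)
qed

lemma I_const_eq_Beta:
  fixes \<alpha> \<beta> d :: real
  assumes d: "d > 0" and \<beta>: "\<beta> > 1" and \<alpha>: "\<alpha> > d * (\<beta> - 1)"
  shows "I_const \<alpha> \<beta> d = Beta (d / \<alpha>) (1 / (\<beta> - 1) - d / \<alpha>)"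
proof -
  have "\<alpha> > 0" using d \<beta> \<alpha> by (smt (verit) mult_pos_pos)
  then have "d / \<alpha> > 0" and "1 / (\<beta> - 1) > d / \<alpha>"
    using d \<beta> \<alpha> by (simp_all add: field_simps)
  then show ?thesis
    unfolding I_const_def by (rule interval_integral_Beta_halfline)
qed

lemma C_const_eq:
  fixes \<alpha> \<beta> d :: real
  assumes d: "d > 0" and \<beta>: "\<beta> > 1" and \<alpha>: "\<alpha> > d * (\<beta> - 1)"
  defines "t \<equiv> d * (\<beta> - 1) / \<alpha>"
  shows "C_const \<alpha> \<beta> d = (1 / t) powr (1 / \<beta>) * (t / (1 - t)) powr ((1 - t) / \<beta>)
                         * (unit_ball_vol d * (d / \<alpha>) * I_const \<alpha> \<beta> d) powr ((\<beta> - 1) / \<beta>)"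
proof -
  have "\<alpha> > 0" using d \<beta> \<alpha> by (smt (verit) mult_pos_pos)
  then have "1 - t = (\<alpha> - d * (\<beta> - 1)) / \<alpha>"
    by (simp add: t_def field_simps)
  then have "\<alpha> / (d * (\<beta> - 1)) = 1 / t"
    and "d * (\<beta> - 1) / (\<alpha> - d * (\<beta> - 1)) = t / (1 - t)"
    and "(\<alpha> - d * (\<beta> - 1)) / (\<alpha> * \<beta>) = (1 - t) / \<beta>"
    using \<open>\<alpha> > 0\<close> \<alpha> by (simp_all add: t_def)
  moreover have "2 * pi powr (d / 2) / Gamma (d / 2) * (1 / \<alpha>) = unit_ball_vol d * (d / \<alpha>)"
    using unit_ball_vol_times_dim[OF d] by simp
  ultimately show ?thesis
    by (simp add: C_const_def)
qed

lemma C_const_pos: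
  fixes \<alpha> \<beta> d :: real
  assumes d: "d > 0" and \<beta>: "\<beta> > 1" and \<alpha>: "\<alpha> > d * (\<beta> - 1)"
  shows "C_const \<alpha> \<beta> d > 0"
proof -
  have "\<alpha> > 0" using d \<beta> \<alpha> by (smt (verit) mult_pos_pos)
  then have "d / \<alpha> > 0" and "1 / (\<beta> - 1) - d / \<alpha> > 0"
    using d \<beta> \<alpha> by (simp_all add: field_simps)
  then have "I_const \<alpha> \<beta> d > 0"
    using I_const_eq_Beta[OF d \<beta> \<alpha>] \<beta> by (simp add: Beta_def)
  moreover have "Gamma (d / 2) \<noteq> 0"
    using d by (simp add: Gamma_eq_zero_iff nonpos_Ints_def)
  ultimately show ?thesis
    unfolding C_const_def using d \<beta> \<alpha> \<open>\<alpha> > 0\<close> by (intro mult_pos_pos) simp_all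
qed

(* l is the minimiser over l > 0 of the left-hand side. *)
lemma interpolation_bound_at_optimal_weight:
  fixes a b \<kappa> \<beta> m t :: real
  assumes a: "a > 0" and b: "b > 0" and \<kappa>: "\<kappa> > 0" and \<beta>: "\<beta> > 1" and m: "m > 0"
    and t: "t = m * (\<beta> - 1)" "t < 1"
  defines "l \<equiv> t * a / ((1 - t) * b)"
  shows "(a + l * b) powr (1 / \<beta>) * (\<kappa> * l powr (-m)) powr ((\<beta> - 1) / \<beta>)
       = (1 / t) powr (1 / \<beta>) * (t / (1 - t)) powr ((1 - t) / \<beta>) * \<kappa> powr ((\<beta> - 1) / \<beta>)
         * a powr ((1 - t) / \<beta>) * b powr (t / \<beta>)"
    (is "?L = ?R")
proof -
  have "t > 0" using m \<beta> by (simp add: t)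
  then have l: "l > 0" and sum: "a + l * b = a / (1 - t)"
    using t(2) a b by (simp_all add: l_def field_simps)
  have pos: "?L > 0" "?R > 0"
    using a b \<kappa> l \<open>t > 0\<close> t(2) by (simp_all add: sum)
  have lnL: "ln ?L = (ln a - ln (1 - t)) / \<beta> + (\<beta> - 1) / \<beta> * (ln \<kappa> - m * ln l)"
    unfolding sum using a \<kappa> l t(2) by (simp add: ln_mult ln_powr ln_div)
  have lnR: "ln ?R = - ln t / \<beta> + (1 - t) / \<beta> * (ln t - ln (1 - t)) + (\<beta> - 1) / \<beta> * ln \<kappa>
                       + (1 - t) / \<beta> * ln a + t / \<beta> * ln b"
    using a b \<kappa> \<open>t > 0\<close> t(2) by (simp add: ln_mult ln_powr ln_div)
  have lnl: "ln l = ln t + ln a - ln (1 - t) - ln b"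
    using \<open>t > 0\<close> t(2) a b by (simp add: l_def ln_div ln_mult)
  have "ln ?L = ln ?R"
    unfolding lnL lnR lnl using \<beta> by (simp add: t(1) field_simps)
  then show ?thesis
    using pos by simp
qed

lemma nn_integral_eq_0_if_moment_eq_0:
  fixes g :: "'a::euclidean_space \<Rightarrow> real" and \<alpha> \<beta> :: real
  assumes g: "g \<in> borel_measurable lebesgue" "\<And>x. g x \<ge> 0"
    and zero: "(\<integral>\<^sup>+ x. ennreal (g x powr \<beta>) \<partial>lebesgue) = 0
             \<or> (\<integral>\<^sup>+ x. ennreal (norm x powr \<alpha> * g x powr \<beta>) \<partial>lebesgue) = 0"
  shows "(\<integral>\<^sup>+ x. ennreal (g x) \<partial>lebesgue) = 0"
proof -
  have "(\<lambda>x. norm x powr \<alpha>) \<in> borel_measurable lebesgue"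
    by (rule measurable_completion) simp
  then have "(\<lambda>x. ennreal (g x powr \<beta>)) \<in> borel_measurable lebesgue"
    and "(\<lambda>x. ennreal (norm x powr \<alpha> * g x powr \<beta>)) \<in> borel_measurable lebesgue"
    using g(1) by measurable
  with zero have "AE x in lebesgue. g x powr \<beta> \<le> 0 \<or> norm x powr \<alpha> * g x powr \<beta> \<le> 0"
    by (auto simp: nn_integral_0_iff_AE elim: eventually_mono)
  moreover have "AE x in lebesgue. x \<noteq> 0"
    by (rule AE_completion) (rule AE_lborel_singleton)
  ultimately have "AE x in lebesgue. g x = 0"
    by eventually_elim (use g(2) in \<open>auto simp: mult_le_0_iff\<close>)
  have "(\<integral>\<^sup>+ x. ennreal (g x) \<partial>lebesgue) = (\<integral>\<^sup>+ x. 0 \<partial>(lebesgue :: 'a measure))"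
    by (rule nn_integral_cong_AE) (use \<open>AE x in lebesgue. g x = 0\<close> in \<open>auto elim: eventually_mono\<close>)
  then show ?thesis
    by simp
qed

lemma nn_integral_le_radial_weight_bound:
  fixes g :: "'a::euclidean_space \<Rightarrow> real" and \<alpha> \<beta> a b l :: real
  assumes g: "g \<in> borel_measurable lebesgue" "\<And>x. g x \<ge> 0"
    and \<beta>: "\<beta> > 1" and \<alpha>: "\<alpha> > real DIM('a) * (\<beta> - 1)"
    and a: "(\<integral>\<^sup>+ x. ennreal (g x powr \<beta>) \<partial>lebesgue) = ennreal a" "a > 0"
    and b: "(\<integral>\<^sup>+ x. ennreal (norm x powr \<alpha> * g x powr \<beta>) \<partial>lebesgue) = ennreal b" "b \<ge> 0"
    and l: "l > 0"
  shows "(\<integral>\<^sup>+ x. ennreal (g x) \<partial>lebesgue)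
       \<le> ennreal ((a + l * b) powr (1 / \<beta>)
                  * (unit_ball_vol DIM('a) * (DIM('a) / \<alpha>) * I_const \<alpha> \<beta> DIM('a)
                     * l powr (-(DIM('a) / \<alpha>))) powr ((\<beta> - 1) / \<beta>))"
proof -
  define w where "w = (\<lambda>x::'a. 1 + l * norm x powr \<alpha>)"
  have d: "real DIM('a) > 0" by simp
  then have "\<alpha> > 0"
    using \<beta> \<alpha> by (smt (verit) mult_pos_pos)
  then have "1 / (\<beta> - 1) > DIM('a) / \<alpha>" "DIM('a) / \<alpha> > 0"
    using \<beta> \<alpha> by (simp_all add: field_simps)
  then have "Beta (DIM('a) / \<alpha>) (1 / (\<beta> - 1) - DIM('a) / \<alpha>) > 0"
    using \<beta> by (simp add: Beta_def)
  have "(\<lambda>x::'a. norm x powr \<alpha>) \<in> borel_measurable lebesgue"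
    by (rule measurable_completion) simp
  then have w: "w \<in> borel_measurable lebesgue" "\<And>x. w x > 0"
    using l by (auto simp: w_def add_pos_nonneg)
  have "(\<lambda>x. g x powr \<beta>) \<in> borel_measurable lebesgue"
    using g(1) by measurable
  from nn_integral_mult_one_plus[OF this _ \<open>(\<lambda>x. norm x powr \<alpha>) \<in> _\<close> _, of l]
  have P: "(\<integral>\<^sup>+ x. ennreal (g x powr \<beta> * w x) \<partial>lebesgue) = ennreal (a + l * b)"
    using a b l by (simp add: w_def ennreal_plus ennreal_mult)
  have Q: "(\<integral>\<^sup>+ x. ennreal (w x powr (-1 / (\<beta> - 1))) \<partial>lebesgue)
         = ennreal (unit_ball_vol DIM('a) * (DIM('a) / \<alpha>) * I_const \<alpha> \<beta> DIM('a) * l powr (-(DIM('a) / \<alpha>)))"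
    using nn_integral_radial_weight_powr[OF l \<open>\<alpha> > 0\<close>, of "1 / (\<beta> - 1)", where 'a='a]
      I_const_eq_Beta[OF d \<beta> \<alpha>] \<open>1 / (\<beta> - 1) > DIM('a) / \<alpha>\<close>
    by (simp add: w_def mult_ac)
  show ?thesis
    using \<open>Beta _ _ > 0\<close> I_const_eq_Beta[OF d \<beta> \<alpha>] \<open>\<alpha> > 0\<close> a(2) b(2) l
    by (intro nn_integral_le_weighted_Holder[OF \<beta> g w P _ Q]) (simp_all add: add_pos_nonneg)
qed

lemma nn_integral_le_C_const_moments:
  fixes g :: "'a::euclidean_space \<Rightarrow> real" and \<alpha> \<beta> a b :: real
  assumes g: "g \<in> borel_measurable lebesgue" "\<And>x. g x \<ge> 0"
    and \<beta>: "\<beta> > 1" and \<alpha>: "\<alpha> > real DIM('a) * (\<beta> - 1)"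
    and a: "(\<integral>\<^sup>+ x. ennreal (g x powr \<beta>) \<partial>lebesgue) = ennreal a" "a > 0"
    and b: "(\<integral>\<^sup>+ x. ennreal (norm x powr \<alpha> * g x powr \<beta>) \<partial>lebesgue) = ennreal b" "b > 0"
  shows "(\<integral>\<^sup>+ x. ennreal (g x) \<partial>lebesgue)
       \<le> ennreal (C_const \<alpha> \<beta> DIM('a) * a powr ((\<alpha> - DIM('a) * (\<beta> - 1)) / (\<alpha> * \<beta>))
                  * b powr (DIM('a) * (\<beta> - 1) / (\<alpha> * \<beta>)))"
proof -
  define d where "d = real DIM('a)"
  define m where "m = d / \<alpha>"
  define t where "t = m * (\<beta> - 1)"
  define \<kappa> where "\<kappa> = unit_ball_vol d * m * I_const \<alpha> \<beta> d"
  have d: "d > 0" and \<alpha>_d: "\<alpha> > d * (\<beta> - 1)"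
    using \<alpha> by (simp_all add: d_def)
  then have "\<alpha> > 0"
    using \<beta> by (smt (verit) mult_pos_pos)
  then have m: "m > 0" and t: "t > 0" "t < 1" and "1 / (\<beta> - 1) > m"
    using d \<beta> \<alpha>_d by (simp_all add: m_def t_def field_simps)
  then have "Beta m (1 / (\<beta> - 1) - m) > 0"
    using \<beta> by (simp add: Beta_def)
  then have "\<kappa> > 0"
    using I_const_eq_Beta[OF d \<beta> \<alpha>_d, folded m_def] d m by (simp add: \<kappa>_def)
  have "t * a / ((1 - t) * b) > 0"
    using t a(2) b(2) by simp
  from nn_integral_le_radial_weight_bound[OF g \<beta> \<alpha> a b(1) _ this]
  have "(\<integral>\<^sup>+ x. ennreal (g x) \<partial>lebesgue)
      \<le> ennreal ((a + t * a / ((1 - t) * b) * b) powr (1 / \<beta>)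
                 * (\<kappa> * (t * a / ((1 - t) * b)) powr (-m)) powr ((\<beta> - 1) / \<beta>))"
    using b(2) by (simp add: \<kappa>_def m_def d_def mult_ac)
  also have "\<dots> = ennreal (C_const \<alpha> \<beta> d * a powr ((1 - t) / \<beta>) * b powr (t / \<beta>))"
    using interpolation_bound_at_optimal_weight[OF a(2) b(2) \<open>\<kappa> > 0\<close> \<beta> m t_def t(2)]
      C_const_eq[OF d \<beta> \<alpha>_d]
    by (simp add: \<kappa>_def m_def t_def)
  also have "(1 - t) / \<beta> = (\<alpha> - d * (\<beta> - 1)) / (\<alpha> * \<beta>)"
    using \<open>\<alpha> > 0\<close> \<beta> by (simp add: t_def m_def field_simps)
  also have "t / \<beta> = d * (\<beta> - 1) / (\<alpha> * \<beta>)"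
    using \<open>\<alpha> > 0\<close> \<beta> by (simp add: t_def m_def field_simps)
  finally show ?thesis
    by (simp add: d_def)
qed

theorem lemma2p3:
  fixes g :: "'a::euclidean_space \<Rightarrow> real" and \<alpha> \<beta> :: real
  assumes g_meas: "g \<in> borel_measurable lebesgue"
    and g_nonneg: "\<And>x. g x \<ge> 0"
    and \<beta>_gt: "\<beta> > 1"
    and \<alpha>_gt: "\<alpha> > real DIM('a) * (\<beta> - 1)"
  shows "(\<integral>\<^sup>+ x. ennreal (g x) \<partial>lebesgue)
           \<le> ennreal (C_const \<alpha> \<beta> (real DIM('a)))
             * ennreal_powr (\<integral>\<^sup>+ x. ennreal (g x powr \<beta>) \<partial>lebesgue)
                 ((\<alpha> - real DIM('a) * (\<beta> - 1)) / (\<alpha> * \<beta>))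
             * ennreal_powr (\<integral>\<^sup>+ x. ennreal (norm x powr \<alpha> * g x powr \<beta>) \<partial>lebesgue)
                 (real DIM('a) * (\<beta> - 1) / (\<alpha> * \<beta>))
       \<and> I_const \<alpha> \<beta> (real DIM('a))
           = Gamma (real DIM('a) / \<alpha>) * Gamma (1 / (\<beta> - 1) - real DIM('a) / \<alpha>)
             / Gamma (1 / (\<beta> - 1))"
proof (intro conjI ennreal_le_mult_powr_cases)
  have d: "real DIM('a) > 0" by simp
  show "C_const \<alpha> \<beta> (real DIM('a)) > 0"
    by (rule C_const_pos[OF d \<beta>_gt \<alpha>_gt])
  show "I_const \<alpha> \<beta> (real DIM('a))
          = Gamma (real DIM('a) / \<alpha>) * Gamma (1 / (\<beta> - 1) - real DIM('a) / \<alpha>)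
            / Gamma (1 / (\<beta> - 1))"
    using I_const_eq_Beta[OF d \<beta>_gt \<alpha>_gt] by (simp add: Beta_def)
qed (use nn_integral_eq_0_if_moment_eq_0[OF g_meas g_nonneg]
         nn_integral_le_C_const_moments[OF g_meas g_nonneg \<beta>_gt \<alpha>_gt] in auto)

end
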